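(* Let $A=\bigoplus_{j=1}^K C(\mathbb T)\otimes M_{n_j}$ and $B=\bigoplus_{i=1}^L C(\mathbb T)\otimes M_{\ell_i}$, and let $\varphi:A\to B$ be a $*$-homomorphism of Type A with multiplicity constants $(a_{i,j})$. Then $\varphi$ is homotopic to a $*$-homomorphism $\psi:A\to B$ of Type B with the same multiplicity constants $(a_{i,j})$.
   Context: Identify $C(\mathbb T)$ with $\{f\in C([0,1]):f(0)=f(1)\}$ via $t\mapsto e^{2\pi i t}$; thus elements of $C(\mathbb T)\otimes M_n$ are continuous $f:[0,1]\to M_n$ with $f(0)=f(1)$, and for $z\in\mathbb T$, $f(z)\in M_n$ denotes the value at the point $z$. $\Sigma_a$ is the symmetric group; for $\sigma\in\Sigma_a$, $v_\sigma\in\mathcal U_a$ is the permutation matrix with $v_\sigma\,\mathrm{diag}(x_1,\dots,x_a)\,v_\sigma^*=\mathrm{diag}(x_{\sigma^{-1}(1)},\dots,x_{\sigma^{-1}(a)})$. Elementary Type A maps: a $*$-homomorphism $\varphi:C(\mathbb T)\otimes M_n\to C(\mathbb T)\otimes M_\ell$ is of Type A if there is a data tuple $(a,\sigma,\lambda_1,\dots,\lambda_a,w)$ with $a\in\mathbb N_0$, $na\le\ell$, $\sigma\in\Sigma_a$, continuous $\lambda_p:[0,1]\to\mathbb T$ with $\lambda_{\sigma(p)}(0)=\lambda_p(1)$ for all $p$, and a continuous path $w:[0,1]\to\mathcal U_a$ with $w(0)=I_a$, $w(1)=v_\sigma$, such that, with $u(t)=\mathrm{diag}(w(t)\otimes I_n,I_{\ell-na})$,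 $\varphi(f)(t)=u(t)\,\mathrm{diag}(f(\lambda_1(t)),\dots,f(\lambda_a(t)),0_{\ell-na})\,u(t)^*$ for $t\in[0,1]$. The number $a$ is the multiplicity. It is of Type B if moreover $\sigma$ is the identity permutation; of Type C if it is of Type B and $w\equiv I_a$; of Type D if it is of Type C and $\lambda_p(0)=\lambda_p(1)=1$ for every $p$. General case: for $A,B$ as in the claim, $\varphi:A\to B$ is of Type A if $\varphi=(\varphi_1,\dots,\varphi_L)$ with $\varphi_i(g_1,\dots,g_K)=\mathrm{diag}(\varphi_{i,1}(g_1),\dots,\varphi_{i,K}(g_K),0,\dots,0)$, where each $\varphi_{i,j}:C(\mathbb T)\otimes M_{n_j}\to C(\mathbb T)\otimes M_{a_{i,j}n_j}$ is an elementary Type A map of multiplicity $a_{i,j}$ and $\sum_j a_{i,j}n_j\le\ell_i$; the $a_{i,j}$ are the multiplicity constants. $\varphi$ is of Type B (resp. C, D) if every $\varphi_{i,j}$ is. Two $*$-homomorphisms $\varphi_0,\varphi_1:A\to B$ are homotopic if there is a family $(\varphi_s)_{s\in[0,1]}$ of $*$-homomorphisms $A\to B$ with $s\mapsto\varphi_s(x)$ norm continuous for every $x\in A$. *)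

theory Defs
  imports "HOL-Analysis.Analysis"
begin

text \<open>Matrices in M_m are represented as functions nat => nat => complex that vanish
outside the index range {0..<m}. An element of the direct sum of K copies of
C(T) tensor M_(n j) is a function g with g j t the value of the j-th summand at the
parameter t in [0,1]; it vanishes for j >= K and for t outside [0,1].\<close>

type_synonym cmat = "nat \<Rightarrow> nat \<Rightarrow> complex"
type_synonym celt = "nat \<Rightarrow> real \<Rightarrow> cmat"

definition mat_in :: "nat \<Rightarrow> cmat \<Rightarrow> bool" where
  "mat_in m M \<longleftrightarrow> (\<forall>i j. (m \<le> i \<or> m \<le> j) \<longrightarrow> M i j = 0)"

definition mzero :: cmat where "mzero = (\<lambda>i j. 0)"

definition ident :: "nat \<Rightarrow> cmat" where
  "ident m = (\<lambda>i j. if i < m \<and> i = j then 1 else 0)"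

definition mmult :: "nat \<Rightarrow> cmat \<Rightarrow> cmat \<Rightarrow> cmat" where
  "mmult m M N = (\<lambda>i j. if i < m \<and> j < m then (\<Sum>k<m. M i k * N k j) else 0)"

definition madj :: "cmat \<Rightarrow> cmat" where
  "madj M = (\<lambda>i j. cnj (M j i))"

definition unitary_mat :: "nat \<Rightarrow> cmat \<Rightarrow> bool" where
  "unitary_mat m U \<longleftrightarrow> mat_in m U \<and> mmult m U (madj U) = ident m \<and> mmult m (madj U) U = ident m"

text \<open>permutation matrix v_sigma: v_sigma diag(x) v_sigma^* = diag(x_(sigma^-1 1),...)\<close>
definition permmat :: "nat \<Rightarrow> (nat \<Rightarrow> nat) \<Rightarrow> cmat" where
  "permmat a \<sigma> = (\<lambda>i j. if i < a \<and> j < a \<and> i = \<sigma> j then 1 else 0)"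

definition alg_carrier :: "nat \<Rightarrow> (nat \<Rightarrow> nat) \<Rightarrow> celt set" where
  "alg_carrier K n = {g. (\<forall>j t. (K \<le> j \<or> t \<notin> {0..1}) \<longrightarrow> g j t = mzero) \<and>
     (\<forall>j<K. (\<forall>t. mat_in (n j) (g j t)) \<and>
            (\<forall>r s. continuous_on {0..1} (\<lambda>t. g j t r s)) \<and> g j 0 = g j 1)}"

definition alg_add :: "celt \<Rightarrow> celt \<Rightarrow> celt" where
  "alg_add g h = (\<lambda>j t r s. g j t r s + h j t r s)"

definition alg_smult :: "complex \<Rightarrow> celt \<Rightarrow> celt" where
  "alg_smult c g = (\<lambda>j t r s. c * g j t r s)"

definition alg_mult :: "(nat \<Rightarrow> nat) \<Rightarrow> celt \<Rightarrow> celt \<Rightarrow> celt" where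
  "alg_mult n g h = (\<lambda>j t. mmult (n j) (g j t) (h j t))"

definition alg_star :: "celt \<Rightarrow> celt" where
  "alg_star g = (\<lambda>j t. madj (g j t))"

definition star_hom :: "nat \<Rightarrow> (nat \<Rightarrow> nat) \<Rightarrow> nat \<Rightarrow> (nat \<Rightarrow> nat) \<Rightarrow> (celt \<Rightarrow> celt) \<Rightarrow> bool" where
  "star_hom K n L ls \<phi> \<longleftrightarrow>
     (\<forall>x\<in>alg_carrier K n. \<phi> x \<in> alg_carrier L ls) \<and>
     (\<forall>x\<in>alg_carrier K n. \<forall>y\<in>alg_carrier K n.
         \<phi> (alg_add x y) = alg_add (\<phi> x) (\<phi> y) \<and>
         \<phi> (alg_mult n x y) = alg_mult ls (\<phi> x) (\<phi> y)) \<and>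
     (\<forall>x\<in>alg_carrier K n. \<forall>c. \<phi> (alg_smult c x) = alg_smult c (\<phi> x)) \<and>
     (\<forall>x\<in>alg_carrier K n. \<phi> (alg_star x) = alg_star (\<phi> x))"

definition vnorm :: "nat \<Rightarrow> (nat \<Rightarrow> complex) \<Rightarrow> real" where
  "vnorm m v = sqrt (\<Sum>i<m. (cmod (v i))\<^sup>2)"

definition mvmult :: "nat \<Rightarrow> cmat \<Rightarrow> (nat \<Rightarrow> complex) \<Rightarrow> (nat \<Rightarrow> complex)" where
  "mvmult m M v = (\<lambda>i. \<Sum>k<m. M i k * v k)"

definition opnorm :: "nat \<Rightarrow> cmat \<Rightarrow> real" where
  "opnorm m M = Sup {vnorm m (mvmult m M v) | v. vnorm m v \<le> 1}"

definition alg_norm :: "nat \<Rightarrow> (nat \<Rightarrow> nat) \<Rightarrow> celt \<Rightarrow> real" where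
  "alg_norm L ls y = Sup ({opnorm (ls i) (y i t) | i t. i < L \<and> t \<in> {0..1}} \<union> {0})"

definition homotopic :: "nat \<Rightarrow> (nat \<Rightarrow> nat) \<Rightarrow> nat \<Rightarrow> (nat \<Rightarrow> nat) \<Rightarrow>
    (celt \<Rightarrow> celt) \<Rightarrow> (celt \<Rightarrow> celt) \<Rightarrow> bool" where
  "homotopic K n L ls \<phi>0 \<phi>1 \<longleftrightarrow>
     (\<exists>\<Phi> :: real \<Rightarrow> celt \<Rightarrow> celt.
        (\<forall>s\<in>{0..1}. star_hom K n L ls (\<Phi> s)) \<and>
        (\<forall>x\<in>alg_carrier K n. \<Phi> 0 x = \<phi>0 x \<and> \<Phi> 1 x = \<phi>1 x) \<and>
        (\<forall>x\<in>alg_carrier K n. \<forall>s0\<in>{0..1}. \<forall>\<epsilon>>0. \<exists>\<delta>>0. \<forall>s\<in>{0..1}.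
            \<bar>s - s0\<bar> < \<delta> \<longrightarrow>
            alg_norm L ls (alg_add (\<Phi> s x) (alg_smult (-1) (\<Phi> s0 x))) < \<epsilon>))"

text \<open>Evaluation of f in C(T) tensor M_n (as a loop on [0,1]) at a point z of the circle:
  z = exp(2 pi i s) with s in [0,1).\<close>
definition Tparam :: "complex \<Rightarrow> real" where
  "Tparam z = frac (Arg z / (2 * pi))"

definition evalT :: "(real \<Rightarrow> cmat) \<Rightarrow> complex \<Rightarrow> cmat" where
  "evalT f z = f (Tparam z)"

text \<open>Data (a, sigma, lambda_1..lambda_a, w) of an elementary Type A map (indices from 0)\<close>
definition elem_data :: "nat \<Rightarrow> (nat \<Rightarrow> nat) \<Rightarrow> (nat \<Rightarrow> real \<Rightarrow> complex) \<Rightarrow> (real \<Rightarrow> cmat) \<Rightarrow> bool" where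
  "elem_data a \<sigma> lam w \<longleftrightarrow>
     \<sigma> permutes {..<a} \<and>
     (\<forall>p<a. continuous_on {0..1} (lam p) \<and> (\<forall>t\<in>{0..1}. cmod (lam p t) = 1)) \<and>
     (\<forall>p<a. lam (\<sigma> p) 0 = lam p 1) \<and>
     (\<forall>r s. continuous_on {0..1} (\<lambda>t. w t r s)) \<and>
     (\<forall>t\<in>{0..1}. unitary_mat a (w t)) \<and>
     w 0 = ident a \<and> w 1 = permmat a \<sigma>"

text \<open>w tensor I_n, with index (p,r) of C^a tensor C^n identified with p*n+r\<close>
definition kron_id :: "nat \<Rightarrow> nat \<Rightarrow> cmat \<Rightarrow> cmat" where
  "kron_id n a W = (\<lambda>i j. if i < a * n \<and> j < a * n \<and> i mod n = j mod n
                            then W (i div n) (j div n) else 0)"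

definition diag_blocks :: "nat \<Rightarrow> nat \<Rightarrow> (nat \<Rightarrow> real \<Rightarrow> complex) \<Rightarrow> (real \<Rightarrow> cmat) \<Rightarrow> real \<Rightarrow> cmat" where
  "diag_blocks n a lam f t = (\<lambda>i j. if i < a * n \<and> j < a * n \<and> i div n = j div n
                          then evalT f (lam (i div n) t) (i mod n) (j mod n) else 0)"

definition elem_map :: "nat \<Rightarrow> nat \<Rightarrow> (nat \<Rightarrow> real \<Rightarrow> complex) \<Rightarrow> (real \<Rightarrow> cmat) \<Rightarrow>
    (real \<Rightarrow> cmat) \<Rightarrow> real \<Rightarrow> cmat" where
  "elem_map n a lam w f t =
     mmult (a * n) (mmult (a * n) (kron_id n a (w t)) (diag_blocks n a lam f t))
                   (madj (kron_id n a (w t)))"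

definition embed_block :: "nat \<Rightarrow> cmat \<Rightarrow> cmat" where
  "embed_block off M = (\<lambda>r s. if off \<le> r \<and> off \<le> s then M (r - off) (s - off) else 0)"

definition block_off :: "nat \<Rightarrow> (nat \<Rightarrow> nat) \<Rightarrow> (nat \<Rightarrow> nat \<Rightarrow> nat) \<Rightarrow> nat \<Rightarrow> nat \<Rightarrow> nat" where
  "block_off K n a i j = (\<Sum>j'<j. a i j' * n j')"

definition typeA_map :: "nat \<Rightarrow> (nat \<Rightarrow> nat) \<Rightarrow> nat \<Rightarrow> (nat \<Rightarrow> nat \<Rightarrow> nat) \<Rightarrow>
    (nat \<Rightarrow> nat \<Rightarrow> nat \<Rightarrow> real \<Rightarrow> complex) \<Rightarrow> (nat \<Rightarrow> nat \<Rightarrow> real \<Rightarrow> cmat) \<Rightarrow> celt \<Rightarrow> celt" where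
  "typeA_map K n L a lam w x = (\<lambda>i t.
     if i < L \<and> t \<in> {0..1} then
       (\<lambda>r s. \<Sum>j<K. embed_block (block_off K n a i j)
                        (elem_map (n j) (a i j) (lam i j) (w i j) (x j) t) r s)
     else mzero)"

definition is_typeA :: "nat \<Rightarrow> (nat \<Rightarrow> nat) \<Rightarrow> nat \<Rightarrow> (nat \<Rightarrow> nat) \<Rightarrow>
    (nat \<Rightarrow> nat \<Rightarrow> nat) \<Rightarrow> (celt \<Rightarrow> celt) \<Rightarrow> bool" where
  "is_typeA K n L ls a \<phi> \<longleftrightarrow>
     star_hom K n L ls \<phi> \<and> (\<forall>i<L. (\<Sum>j<K. a i j * n j) \<le> ls i) \<and>
     (\<exists>\<sigma> lam w. (\<forall>i<L. \<forall>j<K. elem_data (a i j) (\<sigma> i j) (lam i j) (w i j)) \<and>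
        (\<forall>x\<in>alg_carrier K n. \<phi> x = typeA_map K n L a lam w x))"

definition is_typeB :: "nat \<Rightarrow> (nat \<Rightarrow> nat) \<Rightarrow> nat \<Rightarrow> (nat \<Rightarrow> nat) \<Rightarrow>
    (nat \<Rightarrow> nat \<Rightarrow> nat) \<Rightarrow> (celt \<Rightarrow> celt) \<Rightarrow> bool" where
  "is_typeB K n L ls a \<phi> \<longleftrightarrow>
     star_hom K n L ls \<phi> \<and> (\<forall>i<L. (\<Sum>j<K. a i j * n j) \<le> ls i) \<and>
     (\<exists>lam w. (\<forall>i<L. \<forall>j<K. elem_data (a i j) id (lam i j) (w i j)) \<and>
        (\<forall>x\<in>alg_carrier K n. \<phi> x = typeA_map K n L a lam w x))"

end

theory Submission
  imports Defs "HOL-Library.Real_Mod"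
begin

text \<open>Lift each eigenvalue loop \<open>\<lambda>\<^sub>p\<close> to a continuous angle \<open>\<theta>\<^sub>p\<close>. Since
  \<open>\<lambda>\<^bsub>\<sigma>(p)\<^esub>(0) = \<lambda>\<^sub>p(1)\<close>, the differences \<open>\<theta>\<^sub>p(1) - \<theta>\<^bsub>\<sigma>(p)\<^esub>(0)\<close> lie in \<open>2\<pi>\<int>\<close>.
  Deform every \<open>\<lambda>\<^sub>p\<close> into the loop that winds by this difference on \<open>[0,1/2]\<close> and is
  constantly \<open>1\<close> on \<open>[1/2,1]\<close>, and simultaneously reparametrise the unitary path \<open>w\<close> so that
  it stays at \<open>I\<close> on \<open>[0,1/2]\<close> and runs through all of \<open>w\<close> on \<open>[1/2,1]\<close>. At the end of
  the deformation \<open>w\<close> moves only where all \<open>\<lambda>\<^sub>p\<close> equal \<open>1\<close>; there it commutes with the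
  scalar block diagonal, so it can be replaced by \<open>I\<close> and the map becomes of Type B
  (even of Type C). Each stage is again a Type A map with the same \<open>\<sigma>\<close>, hence a
  \<open>*\<close>-homomorphism, and uniform continuity on \<open>[0,1]\<^sup>2\<close> gives norm continuity in the
  deformation parameter.\<close>

section \<open>Index arithmetic and matrices\<close>

lemma sum_lessThan_mult:
  fixes f :: "nat \<Rightarrow> 'a::comm_monoid_add" and a n :: nat
  shows "(\<Sum>k<a*n. f k) = (\<Sum>q<a. \<Sum>r<n. f (q*n + r))"
proof -
  have "(\<Sum>k\<in>{q*n..<q*n+n}. f k) = (\<Sum>r<n. f (q*n + r))" for q
    using sum.shift_bounds_nat_ivl[of f 0 "q*n" n] by (simp add: lessThan_atLeast0 add.commute)
  then show ?thesis using sum.nat_group[of f n a] by simp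
qed

lemma sum_delta_delta:
  fixes X :: "'a::comm_monoid_add" and A a B n :: nat
  assumes "A < a" "B < n"
  shows "(\<Sum>q<a. \<Sum>r<n. if q = A \<and> r = B then X else 0) = X"
proof -
  have "(\<Sum>q<a. \<Sum>r<n. if q = A \<and> r = B then X else 0)
      = (\<Sum>q<a. if q = A then (\<Sum>r<n. if r = B then X else 0) else 0)"
    by (intro sum.cong refl) auto
  then show ?thesis using assms by simp
qed

lemma index_div_mod_less:
  fixes i a n :: nat assumes "i < a*n" shows "i div n < a" "i mod n < n"
proof -
  show "i div n < a" using assms by (rule less_mult_imp_div_less)
  have "n \<noteq> 0" using assms by (intro notI) simp
  then show "i mod n < n" by simp
qed

lemma index_div [simp]: "r < n \<Longrightarrow> (q*n + r) div n = (q::nat)"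
  and index_mod [simp]: "r < n \<Longrightarrow> (q*n + r) mod n = (r::nat)"
  by auto

lemma index_less [simp]:
  fixes q a r n :: nat assumes "q < a" "r < n" shows "q*n + r < a*n"
proof -
  have "q*n + r < Suc q * n" using assms(2) by simp
  also have "\<dots> \<le> a*n" using assms(1) by (intro mult_le_mono1) simp
  finally show ?thesis .
qed

lemma mmult_assoc: "mmult m (mmult m A B) C = mmult m A (mmult m B C)"
  unfolding mmult_def
  by (auto intro!: ext simp: sum_distrib_left sum_distrib_right mult.assoc intro: sum.swap)

lemma madj_mmult: "madj (mmult m A B) = mmult m (madj B) (madj A)"
  unfolding mmult_def madj_def by (auto intro!: ext simp: mult.commute)

lemma madj_madj [simp]: "madj (madj A) = A"
  unfolding madj_def by simp

lemma madj_ident: "madj (ident m) = ident m"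
  unfolding madj_def ident_def by (auto intro!: ext)

lemma madj_mzero: "madj mzero = mzero"
  unfolding madj_def mzero_def by simp

lemma mat_in_mmult: "mat_in m (mmult m A B)"
  unfolding mat_in_def mmult_def by auto

lemma mat_in_ident: "mat_in m (ident m)"
  unfolding mat_in_def ident_def by auto

lemma mat_in_mzero: "mat_in m mzero"
  unfolding mat_in_def mzero_def by simp

lemma mmult_ident_left: "mat_in m A \<Longrightarrow> mmult m (ident m) A = A"
  unfolding mat_in_def mmult_def ident_def
  by (auto intro!: ext simp: if_distrib[of "\<lambda>x. x * _"] cong: if_cong)

lemma mmult_ident_right: "mat_in m A \<Longrightarrow> mmult m A (ident m) = A"
  unfolding mat_in_def mmult_def ident_def
  by (auto intro!: ext simp: if_distrib[of "\<lambda>x. _ * x"] cong: if_cong)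

lemma unitary_mat_ident: "unitary_mat m (ident m)"
  unfolding unitary_mat_def by (simp add: madj_ident mat_in_ident mmult_ident_left)

lemma permmat_id: "permmat a id = ident a"
  unfolding permmat_def ident_def by (auto intro!: ext)

definition madd :: "cmat \<Rightarrow> cmat \<Rightarrow> cmat" where
  "madd A B = (\<lambda>r s. A r s + B r s)"

definition msmult :: "complex \<Rightarrow> cmat \<Rightarrow> cmat" where
  "msmult c A = (\<lambda>r s. c * A r s)"

lemma mmult_madd_left: "mmult m (madd A B) C = madd (mmult m A C) (mmult m B C)"
  unfolding mmult_def madd_def by (auto intro!: ext simp: distrib_right sum.distrib)

lemma mmult_madd_right: "mmult m C (madd A B) = madd (mmult m C A) (mmult m C B)"
  unfolding mmult_def madd_def by (auto intro!: ext simp: distrib_left sum.distrib)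

lemma mmult_msmult_left: "mmult m (msmult c A) B = msmult c (mmult m A B)"
  unfolding mmult_def msmult_def by (auto intro!: ext simp: sum_distrib_left mult.assoc)

lemma mmult_msmult_right: "mmult m B (msmult c A) = msmult c (mmult m B A)"
  unfolding mmult_def msmult_def by (auto intro!: ext simp: sum_distrib_left mult.left_commute)

section \<open>Block diagonals and the elementary maps\<close>

definition block_diag :: "nat \<Rightarrow> nat \<Rightarrow> (nat \<Rightarrow> complex) \<Rightarrow> (real \<Rightarrow> cmat) \<Rightarrow> cmat" where
  "block_diag n a z f = (\<lambda>i j. if i < a*n \<and> j < a*n \<and> i div n = j div n
                                then evalT f (z (i div n)) (i mod n) (j mod n) else 0)"

definition elem_map_at :: "nat \<Rightarrow> nat \<Rightarrow> (nat \<Rightarrow> complex) \<Rightarrow> cmat \<Rightarrow> (real \<Rightarrow> cmat) \<Rightarrow> cmat" where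
  "elem_map_at n a z W f =
     mmult (a*n) (mmult (a*n) (kron_id n a W) (block_diag n a z f)) (madj (kron_id n a W))"

lemma elem_map_eq_elem_map_at: "elem_map n a lam w f t = elem_map_at n a (\<lambda>p. lam p t) (w t) f"
  unfolding elem_map_def elem_map_at_def diag_blocks_def block_diag_def by simp

lemma mat_in_block_diag: "mat_in (a*n) (block_diag n a z f)"
  unfolding mat_in_def block_diag_def by auto

lemma mat_in_elem_map_at: "mat_in (a*n) (elem_map_at n a z W f)"
  unfolding elem_map_at_def by (rule mat_in_mmult)

lemma madj_kron_id: "madj (kron_id n a W) = kron_id n a (madj W)"
  unfolding madj_def kron_id_def by (auto intro!: ext)

lemma madj_block_diag: "madj (block_diag n a z f) = block_diag n a z (\<lambda>t. madj (f t))"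
  unfolding madj_def block_diag_def evalT_def by (auto intro!: ext)

lemma kron_id_ident: "kron_id n a (ident a) = ident (a*n)"
  unfolding kron_id_def ident_def
  by (auto intro!: ext simp: less_mult_imp_div_less) (metis div_mult_mod_eq)

lemma kron_id_mmult: "mmult (a*n) (kron_id n a W) (kron_id n a V) = kron_id n a (mmult a W V)"
proof (intro ext)
  fix i j
  show "mmult (a*n) (kron_id n a W) (kron_id n a V) i j = kron_id n a (mmult a W V) i j"
  proof (cases "i < a*n \<and> j < a*n")
    case True
    then have ij: "i div n < a" "j div n < a" "i mod n < n" "j mod n < n"
      using index_div_mod_less by auto
    have "mmult (a*n) (kron_id n a W) (kron_id n a V) i j
        = (\<Sum>q<a. \<Sum>r<n. kron_id n a W i (q*n + r) * kron_id n a V (q*n + r) j)"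
      using True by (simp add: mmult_def sum_lessThan_mult)
    also have "\<dots> = (\<Sum>q<a. if i mod n = j mod n then W (i div n) q * V q (j div n) else 0)"
      using True ij by (intro sum.cong refl) (auto simp: kron_id_def if_distrib[of "\<lambda>x. x * _"] cong: if_cong)
    also have "\<dots> = kron_id n a (mmult a W V) i j"
      using True ij by (auto simp: kron_id_def mmult_def)
    finally show ?thesis .
  qed (auto simp: mmult_def kron_id_def)
qed

lemma block_diag_mmult:
  "mmult (a*n) (block_diag n a z f) (block_diag n a z g) = block_diag n a z (\<lambda>t. mmult n (f t) (g t))"
proof (intro ext)
  fix i j
  show "mmult (a*n) (block_diag n a z f) (block_diag n a z g) i j
      = block_diag n a z (\<lambda>t. mmult n (f t) (g t)) i j"
  proof (cases "i < a*n \<and> j < a*n")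
    case True
    then have ij: "i div n < a" "j div n < a" "i mod n < n" "j mod n < n"
      using index_div_mod_less by auto
    have "mmult (a*n) (block_diag n a z f) (block_diag n a z g) i j
        = (\<Sum>q<a. \<Sum>r<n. block_diag n a z f i (q*n + r) * block_diag n a z g (q*n + r) j)"
      using True by (simp add: mmult_def sum_lessThan_mult)
    also have "\<dots> = (\<Sum>q<a. if q = i div n \<and> i div n = j div n then (\<Sum>r<n.
         evalT f (z (i div n)) (i mod n) r * evalT g (z (i div n)) r (j mod n)) else 0)"
      using True by (intro sum.cong refl) (auto simp: block_diag_def intro!: sum.neutral)
    also have "\<dots> = block_diag n a z (\<lambda>t. mmult n (f t) (g t)) i j"
      using True ij by (auto simp: block_diag_def mmult_def evalT_def sum.delta')
    finally show ?thesis .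
  qed (auto simp: mmult_def block_diag_def)
qed

lemma block_diag_madd: "block_diag n a z (\<lambda>t. madd (f t) (g t)) = madd (block_diag n a z f) (block_diag n a z g)"
  unfolding block_diag_def madd_def evalT_def by (auto intro!: ext)

lemma block_diag_msmult: "block_diag n a z (\<lambda>t. msmult c (f t)) = msmult c (block_diag n a z f)"
  unfolding block_diag_def msmult_def evalT_def by (auto intro!: ext)

lemma elem_map_at_madd:
  "elem_map_at n a z W (\<lambda>t. madd (f t) (g t)) = madd (elem_map_at n a z W f) (elem_map_at n a z W g)"
  unfolding elem_map_at_def block_diag_madd mmult_madd_left mmult_madd_right ..

lemma elem_map_at_msmult: "elem_map_at n a z W (\<lambda>t. msmult c (f t)) = msmult c (elem_map_at n a z W f)"
  unfolding elem_map_at_def block_diag_msmult mmult_msmult_left mmult_msmult_right ..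

lemma madj_elem_map_at: "madj (elem_map_at n a z W f) = elem_map_at n a z W (\<lambda>t. madj (f t))"
  unfolding elem_map_at_def madj_mmult madj_madj madj_block_diag mmult_assoc ..

lemma elem_map_at_mmult:
  assumes "mmult a (madj W) W = ident a"
  shows "mmult (a*n) (elem_map_at n a z W f) (elem_map_at n a z W g)
       = elem_map_at n a z W (\<lambda>t. mmult n (f t) (g t))"
proof -
  let ?K = "kron_id n a W" and ?m = "a*n"
  have "mmult ?m (madj ?K) ?K = ident ?m"
    unfolding madj_kron_id kron_id_mmult assms kron_id_ident ..
  then show ?thesis
    unfolding elem_map_at_def mmult_assoc block_diag_mmult[symmetric]
    by (simp add: mmult_assoc[symmetric] mmult_ident_right mat_in_mmult)
qed

lemma elem_map_at_cong:
  assumes "\<forall>p<a. z p = z' p" shows "elem_map_at n a z W f = elem_map_at n a z' W f"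
proof -
  have "block_diag n a z f = block_diag n a z' f"
    using assms unfolding block_diag_def by (auto intro!: ext simp: less_mult_imp_div_less)
  then show ?thesis unfolding elem_map_at_def by simp
qed

lemma mmult_kron_id_block_diag:
  "mmult (a*n) (kron_id n a W) (block_diag n a z f) i j =
     (if i < a*n \<and> j < a*n then W (i div n) (j div n) * evalT f (z (j div n)) (i mod n) (j mod n) else 0)"
proof (cases "i < a*n \<and> j < a*n")
  case True
  then have ij: "i div n < a" "j div n < a" "i mod n < n" "j mod n < n"
    using index_div_mod_less by auto
  have "mmult (a*n) (kron_id n a W) (block_diag n a z f) i j
      = (\<Sum>q<a. \<Sum>r<n. kron_id n a W i (q*n + r) * block_diag n a z f (q*n + r) j)"
    using True by (simp add: mmult_def sum_lessThan_mult)
  also have "\<dots> = (\<Sum>q<a. \<Sum>r<n. if q = j div n \<and> r = i mod n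
      then W (i div n) (j div n) * evalT f (z (j div n)) (i mod n) (j mod n) else 0)"
    using True by (intro sum.cong refl) (auto simp: block_diag_def kron_id_def)
  finally show ?thesis using True ij by (simp add: sum_delta_delta)
qed (auto simp: mmult_def)

lemma mmult_block_diag_kron_id:
  "mmult (a*n) (block_diag n a z f) (kron_id n a W) i j =
     (if i < a*n \<and> j < a*n then W (i div n) (j div n) * evalT f (z (i div n)) (i mod n) (j mod n) else 0)"
proof (cases "i < a*n \<and> j < a*n")
  case True
  then have ij: "i div n < a" "j div n < a" "i mod n < n" "j mod n < n"
    using index_div_mod_less by auto
  have "mmult (a*n) (block_diag n a z f) (kron_id n a W) i j
      = (\<Sum>q<a. \<Sum>r<n. block_diag n a z f i (q*n + r) * kron_id n a W (q*n + r) j)"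
    using True by (simp add: mmult_def sum_lessThan_mult)
  also have "\<dots> = (\<Sum>q<a. \<Sum>r<n. if q = i div n \<and> r = j mod n
      then W (i div n) (j div n) * evalT f (z (i div n)) (i mod n) (j mod n) else 0)"
    using True by (intro sum.cong refl) (auto simp: block_diag_def kron_id_def)
  finally show ?thesis using True ij by (simp add: sum_delta_delta)
qed (auto simp: mmult_def)

lemma kron_id_block_diag_intertwine:
  assumes "\<forall>q<a. \<forall>q'<a. W q q' \<noteq> 0 \<longrightarrow> z' q' = z q"
  shows "mmult (a*n) (kron_id n a W) (block_diag n a z' f) = mmult (a*n) (block_diag n a z f) (kron_id n a W)"
proof (intro ext)
  fix i j
  show "mmult (a*n) (kron_id n a W) (block_diag n a z' f) i j = mmult (a*n) (block_diag n a z f) (kron_id n a W) i j"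
    using assms[rule_format, of "i div n" "j div n"] index_div_mod_less[of i a n] index_div_mod_less[of j a n]
    unfolding mmult_kron_id_block_diag mmult_block_diag_kron_id
    by (cases "W (i div n) (j div n) = 0") auto
qed

lemma elem_map_at_intertwine:
  assumes "\<forall>q<a. \<forall>q'<a. W q q' \<noteq> 0 \<longrightarrow> z' q' = z q" and "mmult a W (madj W) = ident a"
  shows "elem_map_at n a z' W f = block_diag n a z f"
proof -
  have "mmult (a*n) (kron_id n a W) (madj (kron_id n a W)) = ident (a*n)"
    unfolding madj_kron_id kron_id_mmult assms kron_id_ident ..
  then show ?thesis
    unfolding elem_map_at_def kron_id_block_diag_intertwine[OF assms(1)] mmult_assoc
    by (simp add: mmult_ident_right mat_in_block_diag)
qed

lemma elem_map_at_ident: "elem_map_at n a z (ident a) f = block_diag n a z f"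
proof (rule elem_map_at_intertwine)
  show "\<forall>q<a. \<forall>q'<a. ident a q q' \<noteq> 0 \<longrightarrow> z q' = z q" by (simp add: ident_def)
  show "mmult a (ident a) (madj (ident a)) = ident a" by (simp add: madj_ident mmult_ident_left mat_in_ident)
qed

lemma elem_map_at_const:
  assumes "\<forall>p<a. z p = c" and "unitary_mat a W"
  shows "elem_map_at n a z W f = elem_map_at n a z (ident a) f"
  using assms unfolding elem_map_at_ident unitary_mat_def by (intro elem_map_at_intertwine) auto

text \<open>A Type A map is a loop: at \<open>t = 1\<close> the permutation unitary \<open>v\<^sub>\<sigma>\<close> undoes the
  permutation of the \<open>\<lambda>\<^sub>p\<close>.\<close>

lemma elem_map_at_period:
  assumes "elem_data a \<sigma> lam w"
  shows "elem_map_at n a (\<lambda>p. lam p 0) (w 0) f = elem_map_at n a (\<lambda>p. lam p 1) (w 1) f"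
proof -
  have d: "\<forall>p<a. lam (\<sigma> p) 0 = lam p 1" "\<forall>t\<in>{0..1}. unitary_mat a (w t)"
    "w 0 = ident a" "w 1 = permmat a \<sigma>"
    using assms unfolding elem_data_def by auto
  have "\<forall>q<a. \<forall>q'<a. permmat a \<sigma> q q' \<noteq> 0 \<longrightarrow> lam q' 1 = lam q 0"
    using d(1) unfolding permmat_def by auto
  moreover have "unitary_mat a (w 1)" using d(2) by simp
  ultimately have "elem_map_at n a (\<lambda>p. lam p 1) (w 1) f = block_diag n a (\<lambda>p. lam p 0) f"
    unfolding d(4) unitary_mat_def by (intro elem_map_at_intertwine) auto
  then show ?thesis unfolding d(3) elem_map_at_ident by simp
qed

definition block_sum :: "nat \<Rightarrow> (nat \<Rightarrow> nat) \<Rightarrow> (nat \<Rightarrow> cmat) \<Rightarrow> cmat" where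
  "block_sum K m M = (\<lambda>r s. \<Sum>j<K. embed_block (\<Sum>j'<j. m j') (M j) r s)"

lemma typeA_map_eq_block_sum:
  "typeA_map K n L a lam w x = (\<lambda>i t. if i < L \<and> t \<in> {0..1} then
     block_sum K (\<lambda>j. a i j * n j) (\<lambda>j. elem_map_at (n j) (a i j) (\<lambda>p. lam i j p t) (w i j t) (x j))
     else mzero)"
  unfolding typeA_map_def block_sum_def block_off_def elem_map_eq_elem_map_at by simp

lemma block_sum_cong: "(\<And>j. j < K \<Longrightarrow> M j = M' j) \<Longrightarrow> block_sum K m M = block_sum K m M'"
  unfolding block_sum_def by (auto intro!: ext sum.cong)

lemma typeA_map_cong:
  assumes "\<forall>i<L. \<forall>j<K. \<forall>t\<in>{0..1}. elem_map_at (n j) (a i j) (\<lambda>p. lam i j p t) (w i j t) (x j)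
                                 = elem_map_at (n j) (a i j) (\<lambda>p. lam' i j p t) (w' i j t) (x j)"
  shows "typeA_map K n L a lam w x = typeA_map K n L a lam' w' x"
proof (rule ext, rule ext)
  fix i t
  show "typeA_map K n L a lam w x i t = typeA_map K n L a lam' w' x i t"
    using assms unfolding typeA_map_eq_block_sum by (auto intro!: block_sum_cong)
qed

lemma embed_block_eq_0:
  "mat_in m A \<Longrightarrow> \<not> (off \<le> r \<and> r < off + m \<and> off \<le> s \<and> s < off + m) \<Longrightarrow> embed_block off A r s = 0"
  unfolding mat_in_def embed_block_def by auto

lemma sum_embed_block_mult:
  assumes A: "mat_in m A" and B: "mat_in m B" and N: "off + m \<le> N"
  shows "(\<Sum>k<N. embed_block off A r k * embed_block off B k c) = embed_block off (mmult m A B) r c"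
proof -
  have "(\<Sum>k<N. embed_block off A r k * embed_block off B k c)
      = (\<Sum>k\<in>{off..<off+m}. embed_block off A r k * embed_block off B k c)"
    using N A B by (intro sum.mono_neutral_right) (auto simp: embed_block_eq_0)
  also have "\<dots> = (\<Sum>k<m. embed_block off A r (off + k) * embed_block off B (off + k) c)"
    using sum.shift_bounds_nat_ivl[of "\<lambda>k. embed_block off A r k * embed_block off B k c" 0 off m]
    by (simp add: lessThan_atLeast0 add.commute)
  also have "\<dots> = embed_block off (mmult m A B) r c"
    using A B unfolding embed_block_def mmult_def mat_in_def by auto
  finally show ?thesis .
qed

lemma embed_block_mult_disjoint:
  assumes "mat_in m A" "mat_in m' B" "off + m \<le> off' \<or> off' + m' \<le> off"
  shows "embed_block off A r k * embed_block off' B k c = 0"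
  using assms embed_block_eq_0[of m A off r k] embed_block_eq_0[of m' B off' k c]
  by (cases "off \<le> k \<and> k < off + m") auto

lemma block_offsets_disjoint:
  fixes m :: "nat \<Rightarrow> nat"
  assumes "j \<noteq> j'"
  shows "(\<Sum>i<j. m i) + m j \<le> (\<Sum>i<j'. m i) \<or> (\<Sum>i<j'. m i) + m j' \<le> (\<Sum>i<j. m i)"
proof -
  have "(\<Sum>i<j. m i) + m j \<le> (\<Sum>i<j'. m i)" if "j < j'" for j j'
    using sum_mono2[of "{..<j'}" "{..<Suc j}" m] that by simp
  then show ?thesis using assms by (metis linorder_neqE_nat)
qed

lemma block_offset_le: "j < K \<Longrightarrow> (\<Sum>i<j. m i) + m j \<le> (\<Sum>i<K. (m::nat \<Rightarrow> nat) i)"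
  using sum_mono2[of "{..<K}" "{..<Suc j}" m] by simp

lemma mat_in_block_sum:
  assumes "\<forall>j<K. mat_in (m j) (M j)" "(\<Sum>j<K. m j) \<le> N"
  shows "mat_in N (block_sum K m M)"
  unfolding mat_in_def block_sum_def
proof (intro allI impI sum.neutral ballI)
  fix r s j assume "N \<le> r \<or> N \<le> s" "j \<in> {..<K}"
  then show "embed_block (\<Sum>j'<j. m j') (M j) r s = 0"
    using assms block_offset_le[of j K m] by (intro embed_block_eq_0[of "m j"]) auto
qed

lemma block_sum_madd: "block_sum K m (\<lambda>j. madd (M j) (M' j)) = madd (block_sum K m M) (block_sum K m M')"
  unfolding block_sum_def madd_def embed_block_def by (auto intro!: ext simp: sum.distrib[symmetric] intro: sum.cong)

lemma block_sum_msmult: "block_sum K m (\<lambda>j. msmult c (M j)) = msmult c (block_sum K m M)"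
  unfolding block_sum_def msmult_def embed_block_def by (auto intro!: ext simp: sum_distrib_left intro: sum.cong)

lemma madj_block_sum: "madj (block_sum K m M) = block_sum K m (\<lambda>j. madj (M j))"
  unfolding block_sum_def madj_def embed_block_def by (auto intro!: ext intro: sum.cong)

lemma block_sum_mmult:
  assumes A: "\<forall>j<K. mat_in (m j) (M j)" and B: "\<forall>j<K. mat_in (m j) (M' j)" and N: "(\<Sum>j<K. m j) \<le> N"
  shows "mmult N (block_sum K m M) (block_sum K m M') = block_sum K m (\<lambda>j. mmult (m j) (M j) (M' j))"
proof (intro ext)
  fix r c
  let ?o = "\<lambda>j. \<Sum>j'<j. m j'"
  let ?P = "\<lambda>j j'. \<Sum>k<N. embed_block (?o j) (M j) r k * embed_block (?o j') (M' j') k c"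
  show "mmult N (block_sum K m M) (block_sum K m M') r c = block_sum K m (\<lambda>j. mmult (m j) (M j) (M' j)) r c"
  proof (cases "r < N \<and> c < N")
    case True
    have "mmult N (block_sum K m M) (block_sum K m M') r c = (\<Sum>j<K. \<Sum>j'<K. ?P j j')"
      using True by (simp add: mmult_def block_sum_def sum_product sum.swap[of _ "{..<N}"])
    also have "\<dots> = (\<Sum>j<K. ?P j j)"
    proof (rule sum.cong[OF refl])
      fix j assume j: "j \<in> {..<K}"
      have "?P j j' = 0" if "j' \<in> {..<K}" "j' \<noteq> j" for j'
        using A B j that block_offsets_disjoint[of j j' m]
        by (auto intro!: sum.neutral embed_block_mult_disjoint[of "m j" _ "m j'"])
      then show "(\<Sum>j'<K. ?P j j') = ?P j j"
        using j by (subst sum.remove[of _ j]) (auto intro!: sum.neutral)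
    qed
    also have "\<dots> = block_sum K m (\<lambda>j. mmult (m j) (M j) (M' j)) r c"
      unfolding block_sum_def using A B N block_offset_le[of _ K m]
      by (intro sum.cong refl sum_embed_block_mult) (auto intro: le_trans)
    finally show ?thesis .
  next
    case False
    have "mat_in N (block_sum K m (\<lambda>j. mmult (m j) (M j) (M' j)))"
      using N by (intro mat_in_block_sum) (auto simp: mat_in_mmult)
    then show ?thesis using False by (auto simp: mmult_def mat_in_def)
  qed
qed

section \<open>Evaluation on the circle and continuity\<close>

lemma Tparam_range: "Tparam z \<in> {0..<1}"
  unfolding Tparam_def by (simp add: frac_lt_1)

lemma cis_Tparam: "cmod z = 1 \<Longrightarrow> cis (2 * pi * Tparam z) = z"
proof -
  assume z: "cmod z = 1"
  have "2 * pi * Tparam z = Arg z + 2 * pi * (- of_int \<lfloor>Arg z / (2*pi)\<rfloor>)"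
    unfolding Tparam_def frac_def by (simp add: algebra_simps)
  then have "cis (2 * pi * Tparam z) = cis (Arg z) * cis (2 * pi * (- of_int \<lfloor>Arg z / (2*pi)\<rfloor>))"
    by (simp add: cis_mult)
  also have "cis (2 * pi * (- of_int \<lfloor>Arg z / (2*pi)\<rfloor>)) = 1"
    by (rule cis_multiple_2pi) (simp add: Ints_minus)
  moreover have "z \<noteq> 0" using z by auto
  ultimately show ?thesis using z cis_Arg[of z] by (simp add: sgn_div_norm)
qed

lemma loop_Tparam_cis:
  assumes s: "s \<in> {0..1}" and h: "h 0 = h 1"
  shows "h (Tparam (cis (2 * pi * s))) = h s"
proof -
  let ?u = "Tparam (cis (2 * pi * s))"
  have u: "?u \<in> {0..<1}" by (rule Tparam_range)
  have "cis (2 * pi * ?u - 2 * pi * s) = 1"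
    using cis_Tparam[of "cis (2 * pi * s)"] by (simp add: cis_divide[symmetric])
  then obtain k :: int where "2 * pi * ?u - 2 * pi * s = of_int k * (2 * pi)"
    unfolding cis_eq_1_iff by blast
  then have "2 * pi * ?u = 2 * pi * (s + k)" by (simp add: algebra_simps)
  then have k: "?u = s + k" by simp
  then have "k = 0 \<or> (k = -1 \<and> s = 1 \<and> ?u = 0)" using u s by auto
  then show ?thesis using k h by auto
qed

text \<open>Evaluating a loop on the circle is continuous: the parametrisation \<open>Tparam\<close> jumps
  at \<open>z = 1\<close>, but there the loop takes the same value at both ends.\<close>

lemma continuous_on_loop_eval:
  fixes h :: "real \<Rightarrow> complex"
  assumes hc: "continuous_on {0..1} h" and h: "h 0 = h 1"
  shows "continuous_on (sphere 0 1) (\<lambda>z. h (Tparam z))"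
proof -
  let ?e = "\<lambda>s::real. cis (2 * pi * s)"
  show ?thesis
  proof (subst continuous_on_closed_vimage, simp, intro allI impI)
    fix B :: "complex set" assume B: "closed B"
    have eq: "(\<lambda>z. h (Tparam z)) -` B \<inter> sphere 0 1 = ?e ` ({0..1} \<inter> h -` B)"
    proof
      show "(\<lambda>z. h (Tparam z)) -` B \<inter> sphere 0 1 \<subseteq> ?e ` ({0..1} \<inter> h -` B)"
      proof
        fix z assume z: "z \<in> (\<lambda>z. h (Tparam z)) -` B \<inter> sphere 0 1"
        then have "z = ?e (Tparam z)" using cis_Tparam by auto
        moreover have "Tparam z \<in> {0..1} \<inter> h -` B" using z Tparam_range[of z] by auto
        ultimately show "z \<in> ?e ` ({0..1} \<inter> h -` B)" by blast
      qed
      show "?e ` ({0..1} \<inter> h -` B) \<subseteq> (\<lambda>z. h (Tparam z)) -` B \<inter> sphere 0 1"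
        using loop_Tparam_cis[OF _ h] by auto
    qed
    have "closed ({0..1} \<inter> h -` B)" by (rule continuous_closed_preimage[OF hc _ B]) simp
    then have "compact ({0..1} \<inter> ({0..1} \<inter> h -` B))" by (intro compact_Int_closed) auto
    then have "compact ({0..1} \<inter> h -` B)" by (simp add: Int_assoc[symmetric])
    then have "compact (?e ` ({0..1} \<inter> h -` B))"
      by (intro compact_continuous_image continuous_intros)
    then show "closed ((\<lambda>z. h (Tparam z)) -` B \<inter> sphere 0 1)"
      unfolding eq by (rule compact_imp_closed)
  qed
qed

lemma continuous_on_mmult_entry:
  assumes "\<forall>r c. continuous_on X (\<lambda>y. A y r c)" "\<forall>r c. continuous_on X (\<lambda>y. B y r c)"
  shows "continuous_on X (\<lambda>y. mmult m (A y) (B y) r c)"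
  unfolding mmult_def using assms by (cases "r < m \<and> c < m") (auto intro!: continuous_intros)

lemma continuous_on_madj_entry:
  "\<forall>r c. continuous_on X (\<lambda>y. A y r c) \<Longrightarrow> continuous_on X (\<lambda>y. madj (A y) r c)"
  unfolding madj_def by (auto intro!: continuous_intros)

lemma continuous_on_kron_id_entry:
  "\<forall>r c. continuous_on X (\<lambda>y. W y r c) \<Longrightarrow> continuous_on X (\<lambda>y. kron_id n a (W y) r c)"
  unfolding kron_id_def by (cases "r < a * n \<and> c < a * n \<and> r mod n = c mod n") auto

lemma continuous_on_block_diag_entry:
  assumes z: "\<forall>p<a. continuous_on X (\<lambda>y. z y p)" "\<forall>p<a. \<forall>y\<in>X. cmod (z y p) = 1"
    and f: "\<forall>r s. continuous_on {0..1} (\<lambda>t. f t r s)" "f 0 = f 1"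
  shows "continuous_on X (\<lambda>y. block_diag n a (z y) f r c)"
proof (cases "r < a * n \<and> c < a * n \<and> r div n = c div n")
  case True
  then have p: "r div n < a" using index_div_mod_less by auto
  have "continuous_on X (\<lambda>y. (\<lambda>u. f (Tparam u) (r mod n) (c mod n)) (z y (r div n)))"
  proof (rule continuous_on_compose2[OF continuous_on_loop_eval[of "\<lambda>t. f t (r mod n) (c mod n)"]])
    show "continuous_on {0..1} (\<lambda>t. f t (r mod n) (c mod n))" using f by blast
    show "f 0 (r mod n) (c mod n) = f 1 (r mod n) (c mod n)" using f by simp
    show "continuous_on X (\<lambda>y. z y (r div n))" using z p by blast
    show "(\<lambda>y. z y (r div n)) ` X \<subseteq> sphere 0 1" using z p by auto
  qed
  then show ?thesis using True unfolding block_diag_def evalT_def by simp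
next
  case False
  then show ?thesis unfolding block_diag_def if_not_P[OF False] by simp
qed

lemma continuous_on_elem_map_at_entry:
  assumes "\<forall>p<a. continuous_on X (\<lambda>y. z y p)" "\<forall>p<a. \<forall>y\<in>X. cmod (z y p) = 1"
    and "\<forall>r s. continuous_on {0..1} (\<lambda>t. f t r s)" "f 0 = f 1"
    and "\<forall>r c. continuous_on X (\<lambda>y. W y r c)"
  shows "continuous_on X (\<lambda>y. elem_map_at n a (z y) (W y) f r c)"
  unfolding elem_map_at_def
  using continuous_on_block_diag_entry[OF assms(1-4)] continuous_on_kron_id_entry[OF assms(5)]
  by (intro continuous_on_mmult_entry allI continuous_on_madj_entry) auto

lemma alg_carrierD:
  assumes "x \<in> alg_carrier K n" "j < K"
  shows "mat_in (n j) (x j t)" "\<forall>r s. continuous_on {0..1} (\<lambda>t. x j t r s)" "x j 0 = x j 1"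
  using assms unfolding alg_carrier_def by auto

lemma continuous_on_block_sum_entry:
  assumes x: "x \<in> alg_carrier K n"
    and z: "\<forall>j<K. \<forall>p<a j. continuous_on X (\<lambda>y. z y j p)" "\<forall>j<K. \<forall>p<a j. \<forall>y\<in>X. cmod (z y j p) = 1"
    and W: "\<forall>j<K. \<forall>r c. continuous_on X (\<lambda>y. W y j r c)"
  shows "continuous_on X
    (\<lambda>y. block_sum K (\<lambda>j. a j * n j) (\<lambda>j. elem_map_at (n j) (a j) (z y j) (W y j) (x j)) r c)"
  unfolding block_sum_def embed_block_def
proof (intro continuous_on_sum)
  fix j assume "j \<in> {..<K}"
  then have "continuous_on X (\<lambda>y. elem_map_at (n j) (a j) (z y j) (W y j) (x j) r' c')" for r' c'
    using z W alg_carrierD[OF x] by (intro continuous_on_elem_map_at_entry) auto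
  then show "continuous_on X (\<lambda>y. if (\<Sum>j'<j. a j' * n j') \<le> r \<and> (\<Sum>j'<j. a j' * n j') \<le> c
      then elem_map_at (n j) (a j) (z y j) (W y j) (x j) (r - (\<Sum>j'<j. a j' * n j')) (c - (\<Sum>j'<j. a j' * n j'))
      else 0)"
    by (cases "(\<Sum>j'<j. a j' * n j') \<le> r \<and> (\<Sum>j'<j. a j' * n j') \<le> c") auto
qed

section \<open>Type A maps are \<open>*\<close>-homomorphisms\<close>

lemma typeA_map_in_carrier:
  assumes data: "\<forall>i<L. \<forall>j<K. elem_data (a i j) (\<sigma> i j) (lam i j) (w i j)"
    and sums: "\<forall>i<L. (\<Sum>j<K. a i j * n j) \<le> ls i"
    and x: "x \<in> alg_carrier K n"
  shows "typeA_map K n L a lam w x \<in> alg_carrier L ls"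
  unfolding alg_carrier_def
proof (intro CollectI conjI allI impI)
  fix i and t :: real assume "L \<le> i \<or> t \<notin> {0..1}"
  then show "typeA_map K n L a lam w x i t = mzero" unfolding typeA_map_eq_block_sum by auto
next
  fix i and t :: real assume "i < L"
  then show "mat_in (ls i) (typeA_map K n L a lam w x i t)"
    unfolding typeA_map_eq_block_sum using sums
    by (auto intro!: mat_in_block_sum mat_in_elem_map_at simp: mat_in_mzero)
next
  fix i r c assume i: "i < L"
  have "continuous_on {0..1} (\<lambda>t. block_sum K (\<lambda>j. a i j * n j)
      (\<lambda>j. elem_map_at (n j) (a i j) (\<lambda>p. lam i j p t) (w i j t) (x j)) r c)"
    using data i x by (intro continuous_on_block_sum_entry) (auto simp: elem_data_def)
  then show "continuous_on {0..1} (\<lambda>t. typeA_map K n L a lam w x i t r c)"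
    by (rule continuous_on_eq) (auto simp: typeA_map_eq_block_sum i)
next
  fix i assume "i < L"
  then show "typeA_map K n L a lam w x i 0 = typeA_map K n L a lam w x i 1"
    using data unfolding typeA_map_eq_block_sum by (auto intro!: block_sum_cong elem_map_at_period)
qed

lemma typeA_map_star_hom:
  assumes data: "\<forall>i<L. \<forall>j<K. elem_data (a i j) (\<sigma> i j) (lam i j) (w i j)"
    and sums: "\<forall>i<L. (\<Sum>j<K. a i j * n j) \<le> ls i"
  shows "star_hom K n L ls (typeA_map K n L a lam w)"
  unfolding star_hom_def
proof (intro conjI ballI allI)
  fix x assume "x \<in> alg_carrier K n"
  then show "typeA_map K n L a lam w x \<in> alg_carrier L ls"
    using typeA_map_in_carrier[OF data sums] by blast
next
  fix x y
  show "typeA_map K n L a lam w (alg_add x y) = alg_add (typeA_map K n L a lam w x) (typeA_map K n L a lam w y)"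
    using block_sum_madd elem_map_at_madd
    unfolding typeA_map_eq_block_sum alg_add_def madd_def by (auto intro!: ext simp: mzero_def)
  show "typeA_map K n L a lam w (alg_mult n x y) = alg_mult ls (typeA_map K n L a lam w x) (typeA_map K n L a lam w y)"
  proof (rule ext, rule ext)
    fix i and t :: real
    show "typeA_map K n L a lam w (alg_mult n x y) i t = alg_mult ls (typeA_map K n L a lam w x) (typeA_map K n L a lam w y) i t"
    proof (cases "i < L \<and> t \<in> {0..1}")
      case True
      have unitary: "unitary_mat (a i j) (w i j t)" if "j < K" for j
        using data that True unfolding elem_data_def by auto
      show ?thesis
        using True sums unitary unfolding typeA_map_eq_block_sum alg_mult_def unitary_mat_def
        by (simp add: block_sum_mmult mat_in_elem_map_at elem_map_at_mmult cong: block_sum_cong)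
    qed (auto intro!: ext simp: typeA_map_eq_block_sum alg_mult_def mmult_def mzero_def)
  qed
next
  fix x c
  show "typeA_map K n L a lam w (alg_smult c x) = alg_smult c (typeA_map K n L a lam w x)"
    using block_sum_msmult elem_map_at_msmult
    unfolding typeA_map_eq_block_sum alg_smult_def msmult_def by (auto intro!: ext simp: mzero_def)
next
  fix x
  show "typeA_map K n L a lam w (alg_star x) = alg_star (typeA_map K n L a lam w x)"
    unfolding typeA_map_eq_block_sum alg_star_def
    by (auto intro!: ext simp: madj_block_sum madj_elem_map_at madj_mzero)
qed

section \<open>Norm estimates and homotopies\<close>

lemma opnorm_le_entry_bound:
  assumes e: "e \<ge> 0" and M: "\<forall>r<m. \<forall>c<m. cmod (M r c) \<le> e"
  shows "opnorm m M \<le> real m * real m * e"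
  unfolding opnorm_def
proof (rule cSup_least)
  have "vnorm m (\<lambda>_. 0) \<le> 1" by (simp add: vnorm_def)
  then show "{vnorm m (mvmult m M v) |v. vnorm m v \<le> 1} \<noteq> {}" by blast
next
  fix y assume "y \<in> {vnorm m (mvmult m M v) |v. vnorm m v \<le> 1}"
  then obtain v where y: "y = vnorm m (mvmult m M v)" and v: "vnorm m v \<le> 1" by auto
  have vnorm_L2: "vnorm m u = L2_set (\<lambda>i. cmod (u i)) {..<m}" for u
    unfolding vnorm_def L2_set_def ..
  have v_entry: "cmod (v k) \<le> 1" if "k < m" for k
    using member_le_L2_set[of "{..<m}" k "\<lambda>i. cmod (v i)"] that v by (simp add: vnorm_L2)
  have Mv_entry: "cmod (mvmult m M v r) \<le> (\<Sum>k<m. e)" if "r < m" for r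
  proof -
    have "cmod (mvmult m M v r) \<le> (\<Sum>k<m. cmod (M r k) * cmod (v k))"
      unfolding mvmult_def using norm_sum[of "\<lambda>k. M r k * v k" "{..<m}"] by (simp add: norm_mult)
    also have "\<dots> \<le> (\<Sum>k<m. e * 1)"
      using M that v_entry e by (intro sum_mono mult_mono) auto
    finally show ?thesis by simp
  qed
  have "y \<le> (\<Sum>r<m. \<bar>cmod (mvmult m M v r)\<bar>)"
    unfolding y vnorm_L2 by (rule L2_set_le_sum_abs)
  also have "\<dots> \<le> (\<Sum>r<m. \<Sum>k<m. e)"
    using Mv_entry by (intro sum_mono) simp
  finally show "y \<le> real m * real m * e" by simp
qed

lemma alg_norm_le_entry_bound:
  assumes e: "e \<ge> 0" and y: "\<forall>i<L. \<forall>t\<in>{0..1}. \<forall>r<ls i. \<forall>c<ls i. cmod (y i t r c) \<le> e"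
  shows "alg_norm L ls y \<le> (real (\<Sum>i<L. ls i))\<^sup>2 * e"
  unfolding alg_norm_def
proof (rule cSup_least)
  fix b assume "b \<in> {opnorm (ls i) (y i t) |i t. i < L \<and> t \<in> {0..1}} \<union> {0}"
  then consider "b = 0" | i t where "b = opnorm (ls i) (y i t)" "i < L" "t \<in> {0..1}" by auto
  then show "b \<le> (real (\<Sum>i<L. ls i))\<^sup>2 * e"
  proof cases
    case 2
    have "ls i \<le> (\<Sum>i<L. ls i)" using 2 by (intro member_le_sum) auto
    then have "real (ls i) \<le> real (\<Sum>i<L. ls i)" by (simp only: of_nat_le_iff)
    then have "real (ls i) * real (ls i) * e \<le> (real (\<Sum>i<L. ls i))\<^sup>2 * e"
      unfolding power2_eq_square using e by (intro mult_right_mono mult_mono) auto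
    moreover have "b \<le> real (ls i) * real (ls i) * e"
      using 2 e y by (auto intro!: opnorm_le_entry_bound)
    ultimately show ?thesis by linarith
  qed (use e in simp)
qed simp

lemma continuous_on_Times_eventually_uniform:
  fixes F :: "'a::metric_space \<times> 'b::metric_space \<Rightarrow> 'c::metric_space"
  assumes "continuous_on (S \<times> T) F" "compact (S \<times> T)" "s0 \<in> S" "e > 0"
  shows "\<forall>\<^sub>F s in nhds s0. s \<in> S \<longrightarrow> (\<forall>t\<in>T. dist (F (s, t)) (F (s0, t)) < e)"
proof -
  obtain d where "d > 0" and d: "\<forall>z\<in>S \<times> T. \<forall>z'\<in>S \<times> T. dist z' z < d \<longrightarrow> dist (F z') (F z) < e"
    using compact_uniformly_continuous[OF assms(1,2)] assms(4) unfolding uniformly_continuous_on_def by metis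
  then show ?thesis
    unfolding eventually_nhds_metric using assms(3) by (intro exI[of _ d]) (auto simp: dist_Pair_Pair)
qed

lemma typeA_map_family_continuous:
  fixes Z :: "real \<Rightarrow> nat \<Rightarrow> nat \<Rightarrow> nat \<Rightarrow> real \<Rightarrow> complex" and W :: "real \<Rightarrow> nat \<Rightarrow> nat \<Rightarrow> real \<Rightarrow> cmat"
  assumes x: "x \<in> alg_carrier K n"
    and Zc: "\<forall>i<L. \<forall>j<K. \<forall>p<a i j. continuous_on ({0..1} \<times> {0..1}) (\<lambda>z. Z (fst z) i j p (snd z))"
    and Zn: "\<forall>i<L. \<forall>j<K. \<forall>p<a i j. \<forall>z\<in>{0..1} \<times> {0..1}. cmod (Z (fst z) i j p (snd z)) = 1"
    and Wc: "\<forall>i<L. \<forall>j<K. \<forall>r c. continuous_on ({0..1} \<times> {0..1}) (\<lambda>z. W (fst z) i j (snd z) r c)"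
    and s0: "s0 \<in> {0..1}" and \<epsilon>: "\<epsilon> > 0"
  shows "\<exists>\<delta>>0. \<forall>s\<in>{0..1}. \<bar>s - s0\<bar> < \<delta> \<longrightarrow>
     alg_norm L ls (alg_add (typeA_map K n L a (Z s) (W s) x) (alg_smult (-1) (typeA_map K n L a (Z s0) (W s0) x))) < \<epsilon>"
proof -
  define F where "F i z = block_sum K (\<lambda>j. a i j * n j)
      (\<lambda>j. elem_map_at (n j) (a i j) (\<lambda>p. Z (fst z) i j p (snd z)) (W (fst z) i j (snd z)) (x j))" for i z
  define N where "N = (\<Sum>i<L. ls i)"
  define e where "e = \<epsilon> / ((real N)\<^sup>2 + 1)"
  have N2: "(real N)\<^sup>2 + 1 > 0" by (intro add_nonneg_pos) simp_all
  then have e: "e > 0" unfolding e_def using \<epsilon> by simp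
  have Nle: "ls i \<le> N" if "i < L" for i unfolding N_def using that by (intro member_le_sum) auto
  define I where "I = {(i, r, c). i < L \<and> r < ls i \<and> c < ls i}"
  have "finite I"
    by (rule finite_subset[of _ "{..<L} \<times> {..<N} \<times> {..<N}"]) (auto simp: I_def dest: Nle)
  moreover have "\<forall>\<^sub>F s in nhds s0. s \<in> {0..1} \<longrightarrow> (\<forall>t\<in>{0..1}. dist (F i (s, t) r c) (F i (s0, t) r c) < e)"
    if "(i, r, c) \<in> I" for i r c
  proof (rule continuous_on_Times_eventually_uniform[of _ _ "\<lambda>z. F i z r c"])
    show "continuous_on ({0..1} \<times> {0..1}) (\<lambda>z. F i z r c)"
      unfolding F_def using that x Zc Zn Wc by (intro continuous_on_block_sum_entry) (auto simp: I_def)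
  qed (use s0 e in \<open>auto intro: compact_Times\<close>)
  ultimately have "\<forall>\<^sub>F s in nhds s0. \<forall>(i, r, c)\<in>I. s \<in> {0..1} \<longrightarrow>
      (\<forall>t\<in>{0..1}. dist (F i (s, t) r c) (F i (s0, t) r c) < e)"
    by (auto intro: eventually_ball_finite)
  then obtain \<delta> where "\<delta> > 0" and \<delta>: "\<And>s. dist s s0 < \<delta> \<Longrightarrow> \<forall>(i, r, c)\<in>I. s \<in> {0..1} \<longrightarrow>
      (\<forall>t\<in>{0..1}. dist (F i (s, t) r c) (F i (s0, t) r c) < e)"
    unfolding eventually_nhds_metric by blast
  have "alg_norm L ls (alg_add (typeA_map K n L a (Z s) (W s) x) (alg_smult (-1) (typeA_map K n L a (Z s0) (W s0) x))) < \<epsilon>"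
    if s: "s \<in> {0..1}" "\<bar>s - s0\<bar> < \<delta>" for s
  proof -
    have "alg_norm L ls (alg_add (typeA_map K n L a (Z s) (W s) x) (alg_smult (-1) (typeA_map K n L a (Z s0) (W s0) x)))
        \<le> (real N)\<^sup>2 * e"
      unfolding N_def
    proof (rule alg_norm_le_entry_bound)
      show "\<forall>i<L. \<forall>t\<in>{0..1}. \<forall>r<ls i. \<forall>c<ls i. cmod (alg_add (typeA_map K n L a (Z s) (W s) x)
          (alg_smult (-1) (typeA_map K n L a (Z s0) (W s0) x)) i t r c) \<le> e"
        using \<delta>[of s] s unfolding I_def
        by (auto simp: typeA_map_eq_block_sum alg_add_def alg_smult_def F_def dist_norm dist_real_def
            intro: less_imp_le)
    qed (use e in simp)
    also have "\<dots> < ((real N)\<^sup>2 + 1) * e" using e by simp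
    also have "\<dots> = \<epsilon>" unfolding e_def using N2 by simp
    finally show ?thesis .
  qed
  then show ?thesis using \<open>\<delta> > 0\<close> by blast
qed

lemma typeA_maps_homotopic:
  fixes Z :: "real \<Rightarrow> nat \<Rightarrow> nat \<Rightarrow> nat \<Rightarrow> real \<Rightarrow> complex" and W :: "real \<Rightarrow> nat \<Rightarrow> nat \<Rightarrow> real \<Rightarrow> cmat"
  assumes data: "\<forall>s\<in>{0..1}. \<forall>i<L. \<forall>j<K. elem_data (a i j) (\<sigma> i j) (Z s i j) (W s i j)"
    and Zc: "\<forall>i<L. \<forall>j<K. \<forall>p<a i j. continuous_on ({0..1} \<times> {0..1}) (\<lambda>z. Z (fst z) i j p (snd z))"
    and Wc: "\<forall>i<L. \<forall>j<K. \<forall>r c. continuous_on ({0..1} \<times> {0..1}) (\<lambda>z. W (fst z) i j (snd z) r c)"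
    and sums: "\<forall>i<L. (\<Sum>j<K. a i j * n j) \<le> ls i"
  shows "homotopic K n L ls (typeA_map K n L a (Z 0) (W 0)) (typeA_map K n L a (Z 1) (W 1))"
  unfolding homotopic_def
proof (intro exI[of _ "\<lambda>s. typeA_map K n L a (Z s) (W s)"] conjI ballI allI impI)
  fix s :: real assume "s \<in> {0..1}"
  then show "star_hom K n L ls (typeA_map K n L a (Z s) (W s))"
    using data sums by (intro typeA_map_star_hom[where \<sigma> = \<sigma>]) auto
next
  fix x and s0 \<epsilon> :: real assume "x \<in> alg_carrier K n" "s0 \<in> {0..1}" "\<epsilon> > 0"
  moreover have "\<forall>i<L. \<forall>j<K. \<forall>p<a i j. \<forall>z\<in>{0..1} \<times> {0..1}. cmod (Z (fst z) i j p (snd z)) = 1"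
    using data unfolding elem_data_def by auto
  ultimately show "\<exists>\<delta>>0. \<forall>s\<in>{0..1}. \<bar>s - s0\<bar> < \<delta> \<longrightarrow> alg_norm L ls
      (alg_add (typeA_map K n L a (Z s) (W s) x) (alg_smult (-1) (typeA_map K n L a (Z s0) (W s0) x))) < \<epsilon>"
    using Zc Wc by (intro typeA_map_family_continuous) auto
qed simp_all

lemma homotopic_cong:
  assumes "homotopic K n L ls \<phi>0 \<phi>1" "\<forall>x\<in>alg_carrier K n. \<psi>0 x = \<phi>0 x \<and> \<psi>1 x = \<phi>1 x"
  shows "homotopic K n L ls \<psi>0 \<psi>1"
  using assms unfolding homotopic_def by auto

section \<open>Unwinding the eigenvalue loops\<close>

lemma continuous_circle_lift:
  fixes lam :: "real \<Rightarrow> complex"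
  assumes "continuous_on {0..1} lam" "\<forall>t\<in>{0..1}. cmod (lam t) = 1"
  shows "\<exists>\<theta>. continuous_on {0..1} \<theta> \<and> (\<forall>t\<in>{0..1}. lam t = cis (\<theta> t))"
proof -
  have "contractible {0..1::real}" by (intro convex_imp_contractible) simp
  then obtain g where g: "continuous_on {0..1} g" "\<And>t. t \<in> {0..1} \<Longrightarrow> lam t = exp (g t)"
    using continuous_logarithm_on_contractible[OF assms(1)] assms(2) by (metis norm_zero zero_neq_one)
  have "lam t = cis (Im (g t))" if t: "t \<in> {0..1}" for t
  proof -
    have "cmod (lam t) = 1" using assms(2) t by blast
    then have "exp (Re (g t)) = 1" using g(2)[OF t] by (simp add: norm_exp_eq_Re)
    then have "g t = \<i> * complex_of_real (Im (g t))" by (simp add: complex_eq_iff)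
    then show ?thesis using g(2)[OF t] by (metis cis_conv_exp)
  qed
  moreover have "continuous_on {0..1} (\<lambda>t. Im (g t))" using g(1) by (intro continuous_intros)
  ultimately show ?thesis by blast
qed

definition angle_lift :: "nat \<Rightarrow> (nat \<Rightarrow> real \<Rightarrow> complex) \<Rightarrow> (nat \<Rightarrow> real \<Rightarrow> real) \<Rightarrow> bool" where
  "angle_lift a lam \<theta> \<longleftrightarrow> (\<forall>p<a. continuous_on {0..1} (\<theta> p) \<and> (\<forall>t\<in>{0..1}. lam p t = cis (\<theta> p t)))"

lemma elem_data_angle_lift:
  assumes "elem_data a \<sigma> lam w" shows "\<exists>\<theta>. angle_lift a lam \<theta>"
proof -
  have "\<forall>p. \<exists>\<theta>. p < a \<longrightarrow> continuous_on {0..1} \<theta> \<and> (\<forall>t\<in>{0..1}. lam p t = cis (\<theta> t))"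
    using assms continuous_circle_lift unfolding elem_data_def by metis
  then show ?thesis unfolding angle_lift_def by metis
qed

lemma angle_lift_winding:
  assumes "elem_data a \<sigma> lam w" "angle_lift a lam \<theta>" "p < a"
  shows "cis (\<theta> p 1 - \<theta> (\<sigma> p) 0) = 1"
proof -
  have "\<sigma> p < a" using assms unfolding elem_data_def by (meson lessThan_iff permutes_in_image)
  then have "cis (\<theta> (\<sigma> p) 0) = cis (\<theta> p 1)"
    using assms unfolding elem_data_def angle_lift_def by auto
  then show ?thesis by (simp add: cis_divide[symmetric])
qed

definition unwind :: "(nat \<Rightarrow> nat) \<Rightarrow> (nat \<Rightarrow> real \<Rightarrow> real) \<Rightarrow> real \<Rightarrow> nat \<Rightarrow> real \<Rightarrow> complex" where
  "unwind \<sigma> \<theta> s p t = cis ((1 - s) * \<theta> p t + s * (\<theta> p 1 - \<theta> (\<sigma> p) 0) * min (2 * t) 1)"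

definition delay :: "real \<Rightarrow> real \<Rightarrow> real" where
  "delay s t = (1 - s) * t + s * max 0 (2 * t - 1)"

lemma delay_in_unit:
  assumes "s \<in> {0..1}" "t \<in> {0..1}" shows "delay s t \<in> {0..1}"
proof -
  have "(1 - s) * t \<le> (1 - s) * 1" using assms by (intro mult_left_mono) auto
  moreover have "s * max 0 (2 * t - 1) \<le> s * 1" using assms by (intro mult_left_mono) auto
  ultimately show ?thesis using assms unfolding delay_def by auto
qed

lemma continuous_on_delay_path:
  assumes "continuous_on {0..1} g"
  shows "continuous_on ({0..1} \<times> {0..1}) (\<lambda>z. g (delay (fst z) (snd z)))"
proof (rule continuous_on_compose2[OF assms])
  show "continuous_on ({0..1} \<times> {0..1}) (\<lambda>z. delay (fst z) (snd z))"
    unfolding delay_def by (intro continuous_intros)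
qed (auto intro: delay_in_unit)

lemma continuous_on_unwind:
  assumes "angle_lift a lam \<theta>" "p < a"
  shows "continuous_on ({0..1} \<times> {0..1}) (\<lambda>z. unwind \<sigma> \<theta> (fst z) p (snd z))"
proof -
  have "continuous_on ({0..1} \<times> {0..1}) (\<lambda>z. \<theta> p (snd z))"
    by (rule continuous_on_compose2[of "{0..1}" "\<theta> p"])
       (use assms in \<open>auto simp: angle_lift_def intro: continuous_intros\<close>)
  then show ?thesis unfolding unwind_def by (intro continuous_intros)
qed

lemma elem_data_unwind:
  assumes d: "elem_data a \<sigma> lam w" and \<theta>: "angle_lift a lam \<theta>" and s: "s \<in> {0..1}"
  shows "elem_data a \<sigma> (unwind \<sigma> \<theta> s) (\<lambda>t. w (delay s t))"
  unfolding elem_data_def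
proof (intro conjI allI impI ballI)
  show "\<sigma> permutes {..<a}" using d unfolding elem_data_def by blast
next
  fix p assume p: "p < a"
  have "continuous_on {0..1} (\<lambda>t. unwind \<sigma> \<theta> (fst (s, t)) p (snd (s, t)))"
    by (rule continuous_on_compose2[of "{0..1} \<times> {0..1}" _ _ "\<lambda>t. (s, t)"])
       (use continuous_on_unwind[OF \<theta> p] s in \<open>auto intro: continuous_intros\<close>)
  then show "continuous_on {0..1} (unwind \<sigma> \<theta> s p)" by simp
next
  fix p assume p: "p < a"
  have "unwind \<sigma> \<theta> s p 1 = cis ((1 - s) * \<theta> (\<sigma> p) 0) * cis (\<theta> p 1 - \<theta> (\<sigma> p) 0)"
    unfolding unwind_def cis_mult by (simp add: algebra_simps)
  then show "unwind \<sigma> \<theta> s (\<sigma> p) 0 = unwind \<sigma> \<theta> s p 1"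
    using angle_lift_winding[OF d \<theta> p] by (simp add: unwind_def)
next
  fix r c
  show "continuous_on {0..1} (\<lambda>t. w (delay s t) r c)"
  proof (rule continuous_on_compose2[of "{0..1}" "\<lambda>u. w u r c"])
    show "continuous_on {0..1} (delay s)" unfolding delay_def by (intro continuous_intros)
  qed (use d delay_in_unit[OF s] in \<open>auto simp: elem_data_def\<close>)
next
  fix t :: real assume "t \<in> {0..1}"
  then show "unitary_mat a (w (delay s t))" using d delay_in_unit[OF s] unfolding elem_data_def by blast
qed (use d in \<open>auto simp: unwind_def delay_def elem_data_def\<close>)

lemma unwind_0: "unwind \<sigma> \<theta> 0 p t = cis (\<theta> p t)"
  unfolding unwind_def by simp

lemma unwind_1_eq_1:
  assumes "elem_data a \<sigma> lam w" "angle_lift a lam \<theta>" "p < a" "t \<in> {0} \<union> {1/2..}"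
  shows "unwind \<sigma> \<theta> 1 p t = 1"
  using assms(4) angle_lift_winding[OF assms(1-3)] unfolding unwind_def by auto

lemma elem_data_unwind_1:
  assumes "elem_data a \<sigma> lam w" "angle_lift a lam \<theta>"
  shows "elem_data a id (unwind \<sigma> \<theta> 1) (\<lambda>t. ident a)"
  using elem_data_unwind[OF assms, of 1] unwind_1_eq_1[OF assms]
  unfolding elem_data_def by (simp add: unitary_mat_ident permmat_id permutes_id)

lemma elem_map_at_unwind_1:
  assumes d: "elem_data a \<sigma> lam w" and \<theta>: "angle_lift a lam \<theta>" and t: "t \<in> {0..1}"
  shows "elem_map_at n a (\<lambda>p. unwind \<sigma> \<theta> 1 p t) (w (delay 1 t)) f
       = elem_map_at n a (\<lambda>p. unwind \<sigma> \<theta> 1 p t) (ident a) f"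
proof (cases "t \<le> 1/2")
  case True
  then show ?thesis using d unfolding delay_def elem_data_def by simp
next
  case False
  then show ?thesis
    using d t unwind_1_eq_1[OF d \<theta>, of _ t] delay_in_unit[of 1 t] unfolding elem_data_def
    by (intro elem_map_at_const) auto
qed

lemma elem_data_angle_lifts:
  assumes "\<forall>i<L. \<forall>j<K. elem_data (a i j) (\<sigma> i j) (lam i j) (w i j)"
  shows "\<exists>\<theta>. \<forall>i<L. \<forall>j<K. angle_lift (a i j) (lam i j) (\<theta> i j)"
proof -
  have "\<forall>i j. \<exists>\<theta>. i < L \<and> j < K \<longrightarrow> angle_lift (a i j) (lam i j) \<theta>"
    using assms elem_data_angle_lift by blast
  then show ?thesis by metis
qed

lemma homotopic_typeA_unwind:
  assumes data: "\<forall>i<L. \<forall>j<K. elem_data (a i j) (\<sigma> i j) (lam i j) (w i j)"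
    and \<theta>: "\<forall>i<L. \<forall>j<K. angle_lift (a i j) (lam i j) (\<theta> i j)"
    and sums: "\<forall>i<L. (\<Sum>j<K. a i j * n j) \<le> ls i"
  shows "homotopic K n L ls (typeA_map K n L a lam w)
           (typeA_map K n L a (\<lambda>i j. unwind (\<sigma> i j) (\<theta> i j) 1) (\<lambda>i j t. ident (a i j)))"
proof -
  define Z where "Z s = (\<lambda>i j. unwind (\<sigma> i j) (\<theta> i j) s)" for s
  define W where "W s i j t = w i j (delay s t)" for s i j t
  have "\<forall>s\<in>{0..1}. \<forall>i<L. \<forall>j<K. elem_data (a i j) (\<sigma> i j) (Z s i j) (W s i j)"
    unfolding Z_def W_def using data \<theta> by (intro ballI allI impI elem_data_unwind) auto
  moreover have "\<forall>i<L. \<forall>j<K. \<forall>p<a i j. continuous_on ({0..1} \<times> {0..1}) (\<lambda>z. Z (fst z) i j p (snd z))"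
    using \<theta> unfolding Z_def by (auto intro: continuous_on_unwind)
  moreover have "\<forall>i<L. \<forall>j<K. \<forall>r c. continuous_on ({0..1} \<times> {0..1}) (\<lambda>z. W (fst z) i j (snd z) r c)"
    using data unfolding W_def elem_data_def by (auto intro: continuous_on_delay_path)
  ultimately have homotopy: "homotopic K n L ls (typeA_map K n L a (Z 0) (W 0)) (typeA_map K n L a (Z 1) (W 1))"
    using sums by (rule typeA_maps_homotopic)
  have at_0: "typeA_map K n L a lam w x = typeA_map K n L a (Z 0) (W 0) x" for x
    using \<theta> unfolding Z_def W_def angle_lift_def
    by (auto intro!: typeA_map_cong elem_map_at_cong simp: unwind_0 delay_def)
  have at_1: "typeA_map K n L a (Z 1) (\<lambda>i j t. ident (a i j)) x = typeA_map K n L a (Z 1) (W 1) x" for x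
    unfolding Z_def W_def using data \<theta>
    by (intro typeA_map_cong allI impI ballI elem_map_at_unwind_1[symmetric]) auto
  have "homotopic K n L ls (typeA_map K n L a lam w) (typeA_map K n L a (Z 1) (\<lambda>i j t. ident (a i j)))"
    using at_0 at_1 by (intro homotopic_cong[OF homotopy]) auto
  then show ?thesis by (simp add: Z_def)
qed

lemma is_typeB_unwind:
  assumes data: "\<forall>i<L. \<forall>j<K. elem_data (a i j) (\<sigma> i j) (lam i j) (w i j)"
    and \<theta>: "\<forall>i<L. \<forall>j<K. angle_lift (a i j) (lam i j) (\<theta> i j)"
    and sums: "\<forall>i<L. (\<Sum>j<K. a i j * n j) \<le> ls i"
  shows "is_typeB K n L ls a
           (typeA_map K n L a (\<lambda>i j. unwind (\<sigma> i j) (\<theta> i j) 1) (\<lambda>i j t. ident (a i j)))"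
proof -
  have data_1: "\<forall>i<L. \<forall>j<K. elem_data (a i j) id (unwind (\<sigma> i j) (\<theta> i j) 1) (\<lambda>t. ident (a i j))"
    using data \<theta> by (intro allI impI elem_data_unwind_1) auto
  show ?thesis
    unfolding is_typeB_def using typeA_map_star_hom[OF data_1 sums] data_1 sums
    by (intro conjI exI[of _ "\<lambda>i j. unwind (\<sigma> i j) (\<theta> i j) 1"] exI[of _ "\<lambda>i j t. ident (a i j)"]) auto
qed

theorem theorem3p3:
  fixes K L :: nat and n ls :: "nat \<Rightarrow> nat" and a :: "nat \<Rightarrow> nat \<Rightarrow> nat"
    and \<phi> :: "celt \<Rightarrow> celt"
  assumes "is_typeA K n L ls a \<phi>"
  shows "\<exists>\<psi>. is_typeB K n L ls a \<psi> \<and> homotopic K n L ls \<phi> \<psi>"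
proof -
  obtain \<sigma> lam w where sums: "\<forall>i<L. (\<Sum>j<K. a i j * n j) \<le> ls i"
    and data: "\<forall>i<L. \<forall>j<K. elem_data (a i j) (\<sigma> i j) (lam i j) (w i j)"
    and \<phi>: "\<forall>x\<in>alg_carrier K n. \<phi> x = typeA_map K n L a lam w x"
    using assms unfolding is_typeA_def by blast
  obtain \<theta> where \<theta>: "\<forall>i<L. \<forall>j<K. angle_lift (a i j) (lam i j) (\<theta> i j)"
    using elem_data_angle_lifts[OF data] by blast
  let ?\<psi> = "typeA_map K n L a (\<lambda>i j. unwind (\<sigma> i j) (\<theta> i j) 1) (\<lambda>i j t. ident (a i j))"
  have "is_typeB K n L ls a ?\<psi>"
    by (rule is_typeB_unwind[OF data \<theta> sums])
  moreover have "homotopic K n L ls \<phi> ?\<psi>"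
    using \<phi> by (intro homotopic_cong[OF homotopic_typeA_unwind[OF data \<theta> sums]]) simp
  ultimately show ?thesis by blast
qed

end
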